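(* For every LCNF formula $\Phi$ and every variable $x$, $\mathsf{MCS}(\mathsf{bve}(\Phi, x)) = \mathsf{MCS}(\Phi)$.
   Context: Fix a countable set $Lbls$ of labels. A labelled clause $C^L$ is a pair of a clause $C$ (a finite set of literals) and a finite set $L \subseteq Lbls$. An LCNF formula $\Phi$ is a finite set of labelled clauses; $Cls(\Phi) = \{C : C^L \in \Phi\}$ and $Lbls(\Phi) = \bigcup_{C^L\in\Phi} L$. $\Phi$ is satisfiable iff $Cls(\Phi)$ is. For $M \subseteq Lbls(\Phi)$, the induced subformula is $\Phi|_M = \{C^L \in \Phi : L \subseteq M\}$. A set $R \subseteq Lbls(\Phi)$ is an MCS of $\Phi$ if (i) $\Phi|_{Lbls(\Phi)\setminus R}$ is satisfiable and (ii) for every $l \in R$, $\Phi|_{(Lbls(\Phi)\setminus R)\cup\{l\}}$ is unsatisfiable; $\mathsf{MCS}(\Phi)$ is the set of all MCSes of $\Phi$. The resolvent of $(x \vee A)^{L_1}$ and $(\neg x \vee B)^{L_2}$ on $x$ is $(A \vee B)^{L_1\cup L_2}$. For an LCNF $\Phi$, let $\Phi_x$ (resp. $\Phi_{\neg x}$) be the set of its labelled clauses containing the literal $x$ (resp. $\neg x$), and $\Phi_x \otimes_x \Phi_{\neg x}$ the set of all resolvents on $x$ of a clause of $\Phi_x$ with a clause of $\Phi_{\neg x}$. Define $\mathsf{ve}(\Phi,x) = (\Phi \setminus (\Phi_x \cup \Phi_{\neg x})) \cup (\Phi_x \otimes_x \Phi_{\neg x})$ and $\mathsf{bve}(\Phi,x)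 = \mathsf{ve}(\Phi,x)$ if $|\mathsf{ve}(\Phi,x)| < |\Phi|$ (number of labelled clauses), and $\mathsf{bve}(\Phi,x) = \Phi$ otherwise. *)

theory Defs
  imports "HOL-Library.Countable"
begin

datatype 'v lit = Pos 'v | Neg 'v

fun lit_val :: "('v \<Rightarrow> bool) \<Rightarrow> 'v lit \<Rightarrow> bool" where
  "lit_val \<sigma> (Pos v) = \<sigma> v"
| "lit_val \<sigma> (Neg v) = (\<not> \<sigma> v)"

type_synonym 'v clause = "'v lit set"
type_synonym ('v, 'l) lclause = "'v clause \<times> 'l set"
type_synonym ('v, 'l) lcnf = "('v, 'l) lclause set"

definition is_lcnf :: "('v, 'l) lcnf \<Rightarrow> bool" where
  "is_lcnf \<Phi> \<longleftrightarrow> finite \<Phi> \<and> (\<forall>(C, L) \<in> \<Phi>. finite C \<and> finite L)"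

definition Cls :: "('v, 'l) lcnf \<Rightarrow> 'v clause set" where
  "Cls \<Phi> = fst ` \<Phi>"

definition Lbls :: "('v, 'l) lcnf \<Rightarrow> 'l set" where
  "Lbls \<Phi> = \<Union> (snd ` \<Phi>)"

definition cnf_sat :: "'v clause set \<Rightarrow> bool" where
  "cnf_sat S \<longleftrightarrow> (\<exists>\<sigma>. \<forall>C \<in> S. \<exists>l \<in> C. lit_val \<sigma> l)"

definition lsat :: "('v, 'l) lcnf \<Rightarrow> bool" where
  "lsat \<Phi> \<longleftrightarrow> cnf_sat (Cls \<Phi>)"

definition induced :: "('v, 'l) lcnf \<Rightarrow> 'l set \<Rightarrow> ('v, 'l) lcnf" where
  "induced \<Phi> M = {(C, L) \<in> \<Phi>. L \<subseteq> M}"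

definition is_MCS :: "('v, 'l) lcnf \<Rightarrow> 'l set \<Rightarrow> bool" where
  "is_MCS \<Phi> R \<longleftrightarrow> R \<subseteq> Lbls \<Phi>
     \<and> lsat (induced \<Phi> (Lbls \<Phi> - R))
     \<and> (\<forall>l \<in> R. \<not> lsat (induced \<Phi> ((Lbls \<Phi> - R) \<union> {l})))"

definition MCS :: "('v, 'l) lcnf \<Rightarrow> 'l set set" where
  "MCS \<Phi> = {R. is_MCS \<Phi> R}"

text \<open>Resolvent of (x \/ A)^L1 and (~x \/ B)^L2 on x is (A \/ B)^(L1 \<union> L2).\<close>
definition resolvent :: "'v \<Rightarrow> ('v, 'l) lclause \<Rightarrow> ('v, 'l) lclause \<Rightarrow> ('v, 'l) lclause" where
  "resolvent x c1 c2 = ((fst c1 - {Pos x}) \<union> (fst c2 - {Neg x}), snd c1 \<union> snd c2)"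

definition occ :: "('v, 'l) lcnf \<Rightarrow> 'v lit \<Rightarrow> ('v, 'l) lcnf" where
  "occ \<Phi> lt = {c \<in> \<Phi>. lt \<in> fst c}"

definition ve :: "('v, 'l) lcnf \<Rightarrow> 'v \<Rightarrow> ('v, 'l) lcnf" where
  "ve \<Phi> x = (\<Phi> - (occ \<Phi> (Pos x) \<union> occ \<Phi> (Neg x)))
     \<union> {resolvent x c1 c2 | c1 c2. c1 \<in> occ \<Phi> (Pos x) \<and> c2 \<in> occ \<Phi> (Neg x)}"

definition bve :: "('v, 'l) lcnf \<Rightarrow> 'v \<Rightarrow> ('v, 'l) lcnf" where
  "bve \<Phi> x = (if card (ve \<Phi> x) < card \<Phi> then ve \<Phi> x else \<Phi>)"

end

theory Submission
  imports Defs
begin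

text \<open>Variable elimination commutes with taking induced subformulas, because the labels of a
  resolvent are the union of the labels of its parents; and by the Davis--Putnam argument
  \<open>ve \<Psi> x\<close> is equisatisfiable with \<open>\<Psi>\<close>. Hence \<open>ve \<Phi> x\<close> and \<open>\<Phi>\<close> have equisatisfiable induced
  subformulas for every label set. The MCSes of a formula are determined by this satisfiability
  profile together with its label set, and a label that disappears in \<open>ve \<Phi> x\<close> cannot belong
  to an MCS of \<open>\<Phi>\<close>, since adding it changes no induced subformula of \<open>ve \<Phi> x\<close>.\<close>

definition sat_clause :: "('v \<Rightarrow> bool) \<Rightarrow> 'v clause \<Rightarrow> bool" where
  "sat_clause \<sigma> C \<longleftrightarrow> (\<exists>l \<in> C. lit_val \<sigma> l)"

definition models :: "('v \<Rightarrow> bool) \<Rightarrow> ('v, 'l) lcnf \<Rightarrow> bool" where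
  "models \<sigma> \<Phi> \<longleftrightarrow> (\<forall>c \<in> \<Phi>. sat_clause \<sigma> (fst c))"

lemma lsat_iff_models: "lsat \<Phi> \<longleftrightarrow> (\<exists>\<sigma>. models \<sigma> \<Phi>)"
  unfolding lsat_def cnf_sat_def Cls_def models_def sat_clause_def by simp

lemma sat_clause_Un [simp]: "sat_clause \<sigma> (A \<union> B) \<longleftrightarrow> sat_clause \<sigma> A \<or> sat_clause \<sigma> B"
  unfolding sat_clause_def by blast

lemma sat_clause_fun_upd:
  assumes "sat_clause \<sigma> (C - {Pos x, Neg x})"
  shows "sat_clause (\<sigma>(x := b)) C"
proof -
  obtain l where "l \<in> C" "l \<noteq> Pos x" "l \<noteq> Neg x" "lit_val \<sigma> l"
    using assms unfolding sat_clause_def by blast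
  moreover from this have "lit_val (\<sigma>(x := b)) l" by (cases l) auto
  ultimately show ?thesis unfolding sat_clause_def by blast
qed

lemma fst_resolvent: "fst (resolvent x c1 c2) = (fst c1 - {Pos x}) \<union> (fst c2 - {Neg x})"
  unfolding resolvent_def by simp

lemma snd_resolvent: "snd (resolvent x c1 c2) = snd c1 \<union> snd c2"
  unfolding resolvent_def by simp

lemma mem_ve_iff:
  "c \<in> ve \<Phi> x \<longleftrightarrow> (c \<in> \<Phi> \<and> Pos x \<notin> fst c \<and> Neg x \<notin> fst c)
     \<or> (\<exists>c1 \<in> \<Phi>. \<exists>c2 \<in> \<Phi>. Pos x \<in> fst c1 \<and> Neg x \<in> fst c2 \<and> c = resolvent x c1 c2)"
  unfolding ve_def occ_def by blast

lemma mem_induced_iff: "c \<in> induced \<Phi> M \<longleftrightarrow> c \<in> \<Phi> \<and> snd c \<subseteq> M"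
  unfolding induced_def by (cases c) auto

lemma induced_Int_Lbls: "induced \<Phi> (M \<inter> Lbls \<Phi>) = induced \<Phi> M"
  unfolding induced_def Lbls_def by fastforce

lemma induced_ve: "induced (ve \<Phi> x) M = ve (induced \<Phi> M) x"
proof -
  have "snd (resolvent x c1 c2) \<subseteq> M \<longleftrightarrow> snd c1 \<subseteq> M \<and> snd c2 \<subseteq> M" for c1 c2
    by (simp add: snd_resolvent)
  then show ?thesis
    unfolding set_eq_iff mem_ve_iff Bex_def mem_induced_iff by blast
qed

lemma Lbls_ve_subset: "Lbls (ve \<Phi> x) \<subseteq> Lbls \<Phi>"
proof -
  have "snd c \<subseteq> Lbls \<Phi>" if "c \<in> ve \<Phi> x" for c
    using that unfolding mem_ve_iff Lbls_def by (force simp: snd_resolvent)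
  then show ?thesis unfolding Lbls_def by blast
qed

lemma sat_clause_resolvent:
  assumes "sat_clause \<sigma> (fst c1)" "sat_clause \<sigma> (fst c2)"
  shows "sat_clause \<sigma> (fst (resolvent x c1 c2))"
proof (cases "\<sigma> x")
  case True
  then have "Neg x \<notin> {l \<in> fst c2. lit_val \<sigma> l}" by simp
  then show ?thesis using assms(2) unfolding sat_clause_def fst_resolvent by blast
next
  case False
  then have "Pos x \<notin> {l \<in> fst c1. lit_val \<sigma> l}" by simp
  then show ?thesis using assms(1) unfolding sat_clause_def fst_resolvent by blast
qed

lemma models_ve:
  assumes "models \<sigma> \<Psi>"
  shows "models \<sigma> (ve \<Psi> x)"
  unfolding models_def
proof
  fix c assume "c \<in> ve \<Psi> x"
  then consider "c \<in> \<Psi>" | c1 c2 where "c1 \<in> \<Psi>" "c2 \<in> \<Psi>" "c = resolvent x c1 c2"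
    unfolding mem_ve_iff by blast
  then show "sat_clause \<sigma> (fst c)"
    using assms unfolding models_def by cases (simp_all add: sat_clause_resolvent)
qed

lemma sat_clause_fun_upd_if_models_ve:
  assumes "models \<sigma> (ve \<Psi> x)" and "c \<in> \<Psi>" "Pos x \<notin> fst c" "Neg x \<notin> fst c"
  shows "sat_clause (\<sigma>(x := b)) (fst c)"
  using assms by (intro sat_clause_fun_upd) (simp add: models_def mem_ve_iff)

lemma models_fun_upd_False_if_models_ve:
  assumes "models \<sigma> (ve \<Psi> x)"
    and "\<And>c. c \<in> \<Psi> \<Longrightarrow> Pos x \<in> fst c \<Longrightarrow> sat_clause \<sigma> (fst c - {Pos x})"
  shows "models (\<sigma>(x := False)) \<Psi>"
  unfolding models_def
proof
  fix c assume c: "c \<in> \<Psi>"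
  consider "Neg x \<in> fst c" | "Pos x \<in> fst c" "Neg x \<notin> fst c" | "Pos x \<notin> fst c" "Neg x \<notin> fst c"
    by blast
  then show "sat_clause (\<sigma>(x := False)) (fst c)"
  proof cases
    case 1
    then show ?thesis unfolding sat_clause_def by force
  next
    case 2
    then have "fst c - {Pos x, Neg x} = fst c - {Pos x}" by blast
    then show ?thesis using assms(2)[OF c] 2 sat_clause_fun_upd[of \<sigma> "fst c" x False] by simp
  next
    case 3
    then show ?thesis by (rule sat_clause_fun_upd_if_models_ve[OF assms(1) c])
  qed
qed

lemma models_fun_upd_True_if_models_ve:
  assumes \<sigma>: "models \<sigma> (ve \<Psi> x)"
    and c1: "c1 \<in> \<Psi>" "Pos x \<in> fst c1" "\<not> sat_clause \<sigma> (fst c1 - {Pos x})"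
  shows "models (\<sigma>(x := True)) \<Psi>"
  unfolding models_def
proof
  fix c assume c: "c \<in> \<Psi>"
  consider "Pos x \<in> fst c" | "Neg x \<in> fst c" "Pos x \<notin> fst c" | "Pos x \<notin> fst c" "Neg x \<notin> fst c"
    by blast
  then show "sat_clause (\<sigma>(x := True)) (fst c)"
  proof cases
    case 1
    then show ?thesis unfolding sat_clause_def by force
  next
    case 2
    \<comment> \<open>\<open>c\<close> is satisfied through its resolvent with \<open>c1\<close>, whose other literals are all false.\<close>
    have "resolvent x c1 c \<in> ve \<Psi> x"
      using c1 c 2 unfolding mem_ve_iff by blast
    then have "sat_clause \<sigma> (fst (resolvent x c1 c))"
      using \<sigma> unfolding models_def by blast
    then have "sat_clause \<sigma> (fst c - {Neg x})"
      using c1(3) unfolding fst_resolvent by simp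
    moreover have "fst c - {Pos x, Neg x} = fst c - {Neg x}" using 2 by blast
    ultimately show ?thesis using sat_clause_fun_upd[of \<sigma> "fst c" x True] by simp
  next
    case 3
    then show ?thesis by (rule sat_clause_fun_upd_if_models_ve[OF \<sigma> c])
  qed
qed

lemma lsat_ve_iff: "lsat (ve \<Psi> x) \<longleftrightarrow> lsat \<Psi>"
proof
  assume "lsat (ve \<Psi> x)"
  then obtain \<sigma> where \<sigma>: "models \<sigma> (ve \<Psi> x)"
    unfolding lsat_iff_models by blast
  show "lsat \<Psi>"
  proof (cases "\<exists>c1 \<in> \<Psi>. Pos x \<in> fst c1 \<and> \<not> sat_clause \<sigma> (fst c1 - {Pos x})")
    case True
    then show ?thesis
      using models_fun_upd_True_if_models_ve[OF \<sigma>] unfolding lsat_iff_models by blast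
  next
    case False
    then show ?thesis
      using models_fun_upd_False_if_models_ve[OF \<sigma>] unfolding lsat_iff_models by blast
  qed
next
  assume "lsat \<Psi>"
  then obtain \<sigma> where "models \<sigma> \<Psi>"
    unfolding lsat_iff_models ..
  then have "models \<sigma> (ve \<Psi> x)" by (rule models_ve)
  then show "lsat (ve \<Psi> x)"
    unfolding lsat_iff_models by blast
qed

lemma is_MCS_subset_Lbls_if_equisat:
  assumes equisat: "\<And>M. lsat (induced \<Psi> M) = lsat (induced \<Phi> M)"
    and "is_MCS \<Phi> R"
  shows "R \<subseteq> Lbls \<Psi>"
proof
  fix l assume "l \<in> R"
  let ?M = "Lbls \<Phi> - R"
  show "l \<in> Lbls \<Psi>"
  proof (rule ccontr)
    assume "l \<notin> Lbls \<Psi>"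
    then have "(?M \<union> {l}) \<inter> Lbls \<Psi> = ?M \<inter> Lbls \<Psi>" by blast
    then have "induced \<Psi> (?M \<union> {l}) = induced \<Psi> ?M"
      by (metis induced_Int_Lbls)
    then have "lsat (induced \<Phi> (?M \<union> {l}))"
      using assms(2) unfolding equisat[symmetric] is_MCS_def by simp
    with \<open>l \<in> R\<close> assms(2) show False unfolding is_MCS_def by blast
  qed
qed

lemma is_MCS_iff_if_equisat:
  assumes equisat: "\<And>M. lsat (induced \<Psi> M) = lsat (induced \<Phi> M)"
    and "Lbls \<Psi> \<subseteq> Lbls \<Phi>" and "R \<subseteq> Lbls \<Psi>"
  shows "is_MCS \<Psi> R \<longleftrightarrow> is_MCS \<Phi> R"
proof -
  have restrict: "induced \<Psi> ((Lbls \<Phi> - R) \<union> L) = induced \<Psi> ((Lbls \<Psi> - R) \<union> L)" for L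
  proof -
    have "((Lbls \<Phi> - R) \<union> L) \<inter> Lbls \<Psi> = ((Lbls \<Psi> - R) \<union> L) \<inter> Lbls \<Psi>"
      using assms(2) by blast
    then show ?thesis by (metis induced_Int_Lbls)
  qed
  have restrict_empty: "induced \<Psi> (Lbls \<Phi> - R) = induced \<Psi> (Lbls \<Psi> - R)"
    using restrict[of "{}"] by simp
  show ?thesis
    unfolding is_MCS_def equisat[symmetric] restrict restrict_empty using assms(2,3) by blast
qed

lemma MCS_eq_if_equisat:
  assumes equisat: "\<And>M. lsat (induced \<Psi> M) = lsat (induced \<Phi> M)"
    and "Lbls \<Psi> \<subseteq> Lbls \<Phi>"
  shows "MCS \<Psi> = MCS \<Phi>"
proof -
  have "is_MCS \<Psi> R \<longleftrightarrow> is_MCS \<Phi> R" for R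
  proof (cases "R \<subseteq> Lbls \<Psi>")
    case True
    then show ?thesis using is_MCS_iff_if_equisat[OF assms] by blast
  next
    case False
    then show ?thesis using is_MCS_subset_Lbls_if_equisat[OF equisat] unfolding is_MCS_def by blast
  qed
  then show ?thesis unfolding MCS_def by blast
qed

theorem proposition2:
  fixes \<Phi> :: "('v, 'l :: countable) lcnf" and x :: 'v
  assumes "is_lcnf \<Phi>"
  shows "MCS (bve \<Phi> x) = MCS \<Phi>"
proof -
  have "lsat (induced (ve \<Phi> x) M) = lsat (induced \<Phi> M)" for M
    by (simp only: induced_ve lsat_ve_iff)
  then have "MCS (ve \<Phi> x) = MCS \<Phi>"
    using Lbls_ve_subset by (rule MCS_eq_if_equisat)
  then show ?thesis unfolding bve_def by simp
qed

end
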